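(* Let $Z$ be a critical Galton–Watson process of index $1+\alpha$ as in the context, with $Z_0=1$, and let $S_0(j):=\sum_{l=0}^{j-1}Z_l$. Then, as $j\uparrow\infty$, $$a_j:=\mathbf{E}\{S_0(j);\,Z_j=0\}\sim\frac{\alpha j}{2\alpha+1}.$$
   Context: $Z=\{Z_n\}$ is a Galton–Watson process whose offspring generating function satisfies $\mathbf{E}\xi=1$ and $f(s)=\mathbf{E}s^{\xi}=s+(1-s)^{1+\alpha}L(1-s)$, $0\leq s\leq1$, with $\alpha\in(0,1]$ and $L$ slowly varying at $0$. $\mathbf{E}\{Y;A\}$ denotes $\mathbf{E}[Y\mathbf{1}_A]$. *)

theory Defs
  imports "HOL-Probability.Probability" "HOL-Library.Landau_Symbols"
begin

definition slowly_varying_at_0 :: "(real \<Rightarrow> real) \<Rightarrow> bool" where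
  "slowly_varying_at_0 L \<longleftrightarrow>
     (\<forall>\<^sub>F x in at_right 0. L x > 0) \<and>
     (\<forall>c>0. ((\<lambda>x. L (c * x) / L x) \<longlongrightarrow> 1) (at_right 0))"

definition GW_process ::
  "'a measure \<Rightarrow> nat pmf \<Rightarrow> (nat \<Rightarrow> nat \<Rightarrow> 'a \<Rightarrow> nat) \<Rightarrow> (nat \<Rightarrow> 'a \<Rightarrow> nat) \<Rightarrow> bool" where
  "GW_process M p xi Z \<longleftrightarrow>
     prob_space M \<and>
     prob_space.indep_vars M (\<lambda>_. count_space UNIV) (\<lambda>(n, i). xi n i) UNIV \<and>
     (\<forall>n i. distr M (count_space UNIV) (xi n i) = measure_pmf p) \<and>
     (\<forall>\<omega>\<in>space M. Z 0 \<omega> = 1 \<and> (\<forall>n. Z (Suc n) \<omega> = (\<Sum>i<Z n \<omega>. xi n i \<omega>)))"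

end

theory Submission
  imports Defs
begin

text \<open>Let \<open>f_n\<close> be the \<open>n\<close>-th iterate of \<open>f\<close>, \<open>q_n = f_n(0) = P(Z_n = 0)\<close> and
  \<open>d_n = q_(n+1) - q_n\<close>. By the branching property, \<open>E{Z_l; Z_j = 0} = E{Z_l q_m^Z_l}
  = q_m f_l'(q_m)\<close> with \<open>m = j - l\<close>, and since \<open>f_l(q_m) = q_j\<close>, convexity of \<open>f_l\<close> traps
  \<open>f_l'(q_m)\<close> between the chord slopes \<open>d_(j-1) / d_(m-1)\<close> and \<open>d_j / d_m\<close>. As \<open>q_m \<rightarrow> 1\<close>,
  \<open>a_j\<close> is therefore asymptotic to \<open>d_j \<Sum>_(m<j) 1/d_m\<close>.

  With \<open>Q_n = 1 - q_n\<close> one has \<open>d_n = Q_n^(1+\<alpha>) L(Q_n)\<close>. Regular variation of this defect and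
  the Stolz-Cesaro theorem give \<open>n d_n / Q_n \<rightarrow> 1/\<alpha>\<close>, hence \<open>n (d_n / d_(n+1) - 1) \<rightarrow> (1+\<alpha>)/\<alpha>\<close>,
  and a second application of Stolz-Cesaro yields \<open>d_j \<Sum>_(m<j) 1/d_m \<sim> \<alpha> j / (2\<alpha>+1)\<close>.\<close>

section \<open>Probability generating functions\<close>

definition pgf :: "nat pmf \<Rightarrow> real \<Rightarrow> real" where
  "pgf p s = (\<Sum>k. pmf p k * s ^ k)"

lemma pmf_sums_one: "pmf (p :: nat pmf) sums 1"
proof -
  have "(\<Sum>k. ennreal (pmf p k)) = (\<integral>\<^sup>+k. ennreal (pmf p k) \<partial>count_space UNIV)"
    by (rule nn_integral_count_space_nat[symmetric])
  also have "\<dots> = 1"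
    using measure_pmf.emeasure_space_1[of p] by (simp add: nn_integral_pmf)
  finally have sum_one: "(\<Sum>k. ennreal (pmf p k)) = 1" .
  have "summable (pmf p)"
    by (rule summable_suminf_not_top) (simp_all add: sum_one)
  moreover have "(\<Sum>k. pmf p k) = 1"
    using sum_one suminf_ennreal2[OF pmf_nonneg \<open>summable (pmf p)\<close>]
    by (metis ennreal_1 ennreal_inj pmf_nonneg suminf_nonneg zero_le_one \<open>summable (pmf p)\<close>)
  ultimately show ?thesis by (simp add: sums_iff)
qed

lemma summable_mult_power_le_one:
  fixes w :: "nat \<Rightarrow> real"
  assumes "\<And>k. 0 \<le> w k" "summable w" "0 \<le> s" "s \<le> 1"
  shows "summable (\<lambda>k. w k * s ^ k)"
  by (rule summable_comparison_test[OF _ assms(2)])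
     (use assms in \<open>auto intro!: exI[of _ 0] mult_left_le simp: power_le_one\<close>)

lemma summable_pgf: "0 \<le> s \<Longrightarrow> s \<le> 1 \<Longrightarrow> summable (\<lambda>k. pmf p k * s ^ k)"
  by (rule summable_mult_power_le_one) (use sums_summable[OF pmf_sums_one] in auto)

lemma pgf_nonneg: "0 \<le> s \<Longrightarrow> s \<le> 1 \<Longrightarrow> 0 \<le> pgf p s"
  unfolding pgf_def by (intro suminf_nonneg summable_pgf) auto

lemma pgf_le_one: "0 \<le> s \<Longrightarrow> s \<le> 1 \<Longrightarrow> pgf p s \<le> 1"
proof -
  assume s: "0 \<le> s" "s \<le> 1"
  have "pgf p s \<le> (\<Sum>k. pmf p k)"
    unfolding pgf_def
    by (rule suminf_le) (use s summable_pgf[OF s] sums_summable[OF pmf_sums_one[of p]] in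
        \<open>auto intro!: mult_left_le simp: power_le_one\<close>)
  also have "\<dots> = 1" using pmf_sums_one[of p] sums_unique by metis
  finally show ?thesis .
qed

lemma funpow_pgf_bounds: "0 \<le> s \<Longrightarrow> s \<le> 1 \<Longrightarrow> 0 \<le> (pgf p ^^ m) s \<and> (pgf p ^^ m) s \<le> 1"
  by (induction m) (auto simp: pgf_nonneg pgf_le_one)

lemma pgf_0: "pgf p 0 = pmf p 0"
  unfolding pgf_def by (rule powser_zero)

lemma power_diff_bounds:
  fixes x y :: real
  assumes "0 \<le> y" "y \<le> x"
  shows "real (Suc k) * y ^ k * (x - y) \<le> x ^ Suc k - y ^ Suc k"
    and "x ^ Suc k - y ^ Suc k \<le> real (Suc k) * x ^ k * (x - y)"
proof -
  define S where "S = (\<Sum>i<Suc k. x ^ i * y ^ (k - i))"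
  have eq: "x ^ Suc k - y ^ Suc k = (x - y) * S"
    unfolding S_def by (rule diff_power_eq_sum)
  have "y ^ k \<le> x ^ i * y ^ (k - i)" if "i < Suc k" for i
  proof -
    have "y ^ k = y ^ i * y ^ (k - i)" using that by (simp flip: power_add)
    also have "\<dots> \<le> x ^ i * y ^ (k - i)"
      using assms by (intro mult_right_mono power_mono) auto
    finally show ?thesis .
  qed
  then have lo: "real (Suc k) * y ^ k \<le> S"
    using sum_bounded_below[of "{..<Suc k}" "y ^ k" "\<lambda>i. x ^ i * y ^ (k - i)"]
    unfolding S_def by (simp del: sum.lessThan_Suc)
  have "x ^ i * y ^ (k - i) \<le> x ^ k" if "i < Suc k" for i
  proof -
    have "x ^ i * y ^ (k - i) \<le> x ^ i * x ^ (k - i)"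
      using assms by (intro mult_left_mono power_mono) auto
    also have "\<dots> = x ^ k" using that by (simp flip: power_add)
    finally show ?thesis .
  qed
  then have hi: "S \<le> real (Suc k) * x ^ k"
    using sum_bounded_above[of "{..<Suc k}" "\<lambda>i. x ^ i * y ^ (k - i)" "x ^ k"]
    unfolding S_def by (simp del: sum.lessThan_Suc)
  show "real (Suc k) * y ^ k * (x - y) \<le> x ^ Suc k - y ^ Suc k"
    unfolding eq using mult_right_mono[OF lo, of "x - y"] assms by (simp add: mult.commute)
  show "x ^ Suc k - y ^ Suc k \<le> real (Suc k) * x ^ k * (x - y)"
    unfolding eq using mult_right_mono[OF hi, of "x - y"] assms by (simp add: mult.commute)
qed

lemma summable_powser_deriv:
  fixes w :: "nat \<Rightarrow> real"
  assumes "\<And>k. 0 \<le> w k" "summable w" "0 \<le> s" "s < 1"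
  shows "summable (\<lambda>k. real (Suc k) * w (Suc k) * s ^ k)"
proof -
  have "summable (\<lambda>k. diffs (\<lambda>_. 1::real) k * s ^ k)"
    by (rule termdiff_converges[where K=1]) (use assms in \<open>auto intro: summable_geometric\<close>)
  then have "summable (\<lambda>k. suminf w * (real (Suc k) * s ^ k))"
    by (intro summable_mult) (simp add: diffs_def)
  moreover have "w (Suc k) \<le> suminf w" for k
    using sum_le_suminf[OF assms(2), of "{Suc k}"] assms(1) by simp
  then have "norm (real (Suc k) * w (Suc k) * s ^ k) \<le> suminf w * (real (Suc k) * s ^ k)" for k
    using assms(1,3) mult_right_mono[of "w (Suc k)" "suminf w" "real (Suc k) * s ^ k"]
    by (simp add: mult_ac)
  ultimately show ?thesis
    by (rule summable_comparison_test'[where N=0])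
qed

lemma powser_chord_bounds:
  fixes w :: "nat \<Rightarrow> real"
  assumes w: "\<And>k. 0 \<le> w k" "summable w" and xy: "0 \<le> y" "y < x" "x \<le> 1"
  shows "y < 1 \<Longrightarrow> (\<Sum>k. real (Suc k) * w (Suc k) * y ^ k) * (x - y) \<le> (\<Sum>k. w k * x ^ k) - (\<Sum>k. w k * y ^ k)"
    and "x < 1 \<Longrightarrow> (\<Sum>k. w k * x ^ k) - (\<Sum>k. w k * y ^ k) \<le> (\<Sum>k. real (Suc k) * w (Suc k) * x ^ k) * (x - y)"
proof -
  have sx: "summable (\<lambda>k. w k * x ^ k)" and sy: "summable (\<lambda>k. w k * y ^ k)"
    using summable_mult_power_le_one[OF w] xy by auto
  have sd: "summable (\<lambda>k. w k * x ^ k - w k * y ^ k)" by (rule summable_diff[OF sx sy])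
  have diff: "(\<Sum>k. w k * x ^ k) - (\<Sum>k. w k * y ^ k) = (\<Sum>k. w (Suc k) * (x ^ Suc k - y ^ Suc k))"
    using suminf_split_head[OF sd] suminf_diff[OF sx sy] by (simp add: algebra_simps)
  have sd': "summable (\<lambda>k. w (Suc k) * (x ^ Suc k - y ^ Suc k))"
    using sd summable_Suc_iff[where f="\<lambda>k. w k * x ^ k - w k * y ^ k"] by (simp add: algebra_simps)
  show "y < 1 \<Longrightarrow> (\<Sum>k. real (Suc k) * w (Suc k) * y ^ k) * (x - y) \<le> (\<Sum>k. w k * x ^ k) - (\<Sum>k. w k * y ^ k)"
  proof -
    assume "y < 1"
    then have sg: "summable (\<lambda>k. real (Suc k) * w (Suc k) * y ^ k)"
      by (rule summable_powser_deriv[OF w xy(1)])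
    show ?thesis unfolding diff suminf_mult2[OF sg]
    proof (rule suminf_le)
      show "real (Suc k) * w (Suc k) * y ^ k * (x - y) \<le> w (Suc k) * (x ^ Suc k - y ^ Suc k)" for k
        using mult_left_mono[OF power_diff_bounds(1)[of y x k] w(1)[of "Suc k"]] xy
        by (simp add: mult_ac)
    qed (use sg sd' in \<open>auto intro: summable_mult2\<close>)
  qed
  show "x < 1 \<Longrightarrow> (\<Sum>k. w k * x ^ k) - (\<Sum>k. w k * y ^ k) \<le> (\<Sum>k. real (Suc k) * w (Suc k) * x ^ k) * (x - y)"
  proof -
    assume "x < 1"
    then have sg: "summable (\<lambda>k. real (Suc k) * w (Suc k) * x ^ k)"
      using xy by (intro summable_powser_deriv[OF w]) auto
    show ?thesis unfolding diff suminf_mult2[OF sg]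
    proof (rule suminf_le)
      show "w (Suc k) * (x ^ Suc k - y ^ Suc k) \<le> real (Suc k) * w (Suc k) * x ^ k * (x - y)" for k
        using mult_left_mono[OF power_diff_bounds(2)[of y x k] w(1)[of "Suc k"]] xy
        by (simp add: mult_ac)
    qed (use sg sd' in \<open>auto intro: summable_mult2\<close>)
  qed
qed

lemma pgf_chord_slopes_mono:
  assumes "0 \<le> a" "a < b" "b < c" "c \<le> 1"
  shows "(pgf p b - pgf p a) / (b - a) \<le> (pgf p c - pgf p b) / (c - b)"
proof -
  have w: "\<And>k. 0 \<le> pmf p k" "summable (pmf p)" using sums_summable[OF pmf_sums_one[of p]] by auto
  define D where "D = (\<Sum>k. real (Suc k) * pmf p (Suc k) * b ^ k)"
  have "pgf p b - pgf p a \<le> D * (b - a)"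
    unfolding pgf_def D_def by (rule powser_chord_bounds(2)[OF w]) (use assms in auto)
  then have "(pgf p b - pgf p a) / (b - a) \<le> D" using assms by (simp add: divide_le_eq)
  also have "D * (c - b) \<le> pgf p c - pgf p b"
    unfolding pgf_def D_def by (rule powser_chord_bounds(1)[OF w]) (use assms in auto)
  then have "D \<le> (pgf p c - pgf p b) / (c - b)" using assms by (simp add: le_divide_eq)
  finally show ?thesis .
qed

lemma sums_if_suminf_ennreal_eq:
  fixes a :: "nat \<Rightarrow> real"
  assumes "\<And>k. 0 \<le> a k" "(\<Sum>k. ennreal (a k)) = ennreal c" "0 \<le> c"
  shows "a sums c"
proof -
  have sm: "summable a" by (rule summable_suminf_not_top) (use assms in auto)
  have "ennreal (suminf a) = ennreal c" using suminf_ennreal2[OF assms(1) sm] assms(2) by simp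
  then have "suminf a = c" using assms(3) suminf_nonneg[OF sm assms(1)] by simp
  then show ?thesis using summable_sums[OF sm] by simp
qed

section \<open>Limits and asymptotics\<close>

lemma stolz_cesaro_accumulate:
  fixes a b :: "nat \<Rightarrow> real"
  assumes step: "\<And>n. n \<ge> N \<Longrightarrow> \<bar>(a (Suc n) - l * b (Suc n)) - (a n - l * b n)\<bar> \<le> e * (b (Suc n) - b n)"
    and "N \<le> n"
  shows "\<bar>(a n - l * b n) - (a N - l * b N)\<bar> \<le> e * (b n - b N)"
  using \<open>N \<le> n\<close>
proof (induction n rule: dec_induct)
  case (step n)
  have "\<bar>(a (Suc n) - l * b (Suc n)) - (a N - l * b N)\<bar>
      \<le> \<bar>(a (Suc n) - l * b (Suc n)) - (a n - l * b n)\<bar> + \<bar>(a n - l * b n) - (a N - l * b N)\<bar>"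
    by linarith
  also have "\<dots> \<le> e * (b (Suc n) - b n) + e * (b n - b N)"
    using step.IH assms(1)[OF step.hyps(1)] by (intro add_mono)
  finally show ?case by (simp add: field_simps)
qed simp

theorem stolz_cesaro:
  fixes a b :: "nat \<Rightarrow> real"
  assumes b_mono: "\<And>n. b n < b (Suc n)" and b_lim: "filterlim b at_top sequentially"
    and lim: "(\<lambda>n. (a (Suc n) - a n) / (b (Suc n) - b n)) \<longlonglongrightarrow> l"
  shows "(\<lambda>n. a n / b n) \<longlonglongrightarrow> l"
proof (rule LIMSEQ_I)
  fix e :: real assume e: "0 < e"
  obtain N where N: "\<And>n. n \<ge> N \<Longrightarrow> \<bar>(a (Suc n) - a n) / (b (Suc n) - b n) - l\<bar> < e/2"
    using LIMSEQ_D[OF lim, of "e/2"] e by auto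
  have "\<bar>(a (Suc n) - l * b (Suc n)) - (a n - l * b n)\<bar> \<le> e/2 * (b (Suc n) - b n)" if "n \<ge> N" for n
  proof -
    have pos: "b (Suc n) - b n > 0" using b_mono[of n] by simp
    have "\<bar>(a (Suc n) - l * b (Suc n)) - (a n - l * b n)\<bar>
        = \<bar>(a (Suc n) - a n) / (b (Suc n) - b n) - l\<bar> * (b (Suc n) - b n)"
      using pos by (simp add: field_simps abs_mult_pos' abs_divide flip: abs_mult)
    also have "\<dots> \<le> e/2 * (b (Suc n) - b n)"
      using N[OF that] pos by (intro mult_right_mono) auto
    finally show ?thesis .
  qed
  note acc = stolz_cesaro_accumulate[of N a l b "e/2", OF this]
  define C where "C = \<bar>a N - l * b N\<bar> + e/2 * \<bar>b N\<bar>"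
  obtain K where K: "\<And>n. n \<ge> K \<Longrightarrow> max 1 (2 * C / e + 1) \<le> b n"
    using b_lim unfolding filterlim_at_top eventually_sequentially by blast
  show "\<exists>n0. \<forall>n\<ge>n0. norm (a n / b n - l) < e"
  proof (intro exI allI impI)
    fix n assume n: "n \<ge> max N K"
    have bn: "b n \<ge> 1" "2 * C / e < b n" using K[of n] n by auto
    have "\<bar>a n - l * b n\<bar> \<le> \<bar>a N - l * b N\<bar> + e/2 * (b n - b N)"
      using acc[of n] n by linarith
    also have "\<dots> \<le> C + e/2 * b n"
      using e by (auto simp: C_def algebra_simps abs_if)
    also have "C < e/2 * b n" using bn e by (simp add: field_simps)
    finally have "\<bar>a n - l * b n\<bar> / b n < e" using bn by (simp add: field_simps)
    moreover have "a n / b n - l = (a n - l * b n) / b n" using bn by (simp add: field_simps)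
    ultimately show "norm (a n / b n - l) < e" using bn by (simp add: abs_divide)
  qed
qed

lemma filterlim_at_top_linear_lower_bound:
  fixes B :: "nat \<Rightarrow> real"
  assumes "\<And>j. real j * c \<le> B j" "0 < c"
  shows "filterlim B at_top sequentially"
proof -
  have "filterlim (\<lambda>j. real j * c) at_top sequentially"
    using filterlim_tendsto_pos_mult_at_top[OF tendsto_const assms(2) filterlim_real_sequentially]
    by (simp add: mult.commute)
  then show ?thesis
    by (rule filterlim_at_top_mono) (use assms in auto)
qed

lemma powr_difference_quotient_at_1:
  "((\<lambda>c. (c powr a - 1) / (c - 1)) \<longlongrightarrow> a) (at (1::real))"
proof -
  have "((\<lambda>z. z powr a) has_real_derivative a * 1 powr (a - 1)) (at 1)"
    by (rule has_real_derivative_powr) simp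
  then show ?thesis by (simp add: has_field_derivative_iff)
qed

lemma at_within_Ioi_Iic_at_right:
  assumes "a < (b::real)"
  shows "at a within ({a<..} \<inter> {..b}) = at_right a"
proof -
  have "{a<..} \<inter> {..b} - {a} = {a..b} - {a}" by auto
  then have "at a within ({a<..} \<inter> {..b}) = at a within {a..b}"
    by (simp add: at_within_def)
  also have "\<dots> = at_right a" by (rule at_within_Icc_at_right[OF assms])
  finally show ?thesis .
qed

lemma asymp_equiv_linear_if_ratio_tendsto:
  fixes a :: "nat \<Rightarrow> real"
  assumes "(\<lambda>j. a j / real j) \<longlonglongrightarrow> c" "c \<noteq> 0"
  shows "a \<sim>[at_top] (\<lambda>j. c * real j)"
proof (rule asymp_equivI')
  have "(\<lambda>j. (a j / real j) / c) \<longlonglongrightarrow> c / c"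
    using assms by (intro tendsto_divide tendsto_const)
  moreover have "eventually (\<lambda>j. (a j / real j) / c = a j / (c * real j)) at_top"
    by (rule eventually_sequentiallyI[of 1]) simp
  ultimately show "((\<lambda>j. a j / (c * real j)) \<longlongrightarrow> 1) at_top"
    using assms(2) by (simp add: Lim_transform_eventually)
qed

section \<open>Galton-Watson processes\<close>

definition offspring_events :: "'a measure \<Rightarrow> (nat \<Rightarrow> nat \<Rightarrow> 'a \<Rightarrow> nat) \<Rightarrow> nat \<times> nat \<Rightarrow> 'a set set" where
  "offspring_events M xi = (\<lambda>(k, i). {xi k i -` A \<inter> space M | A. A \<in> sets (count_space UNIV)})"

definition history :: "'a measure \<Rightarrow> (nat \<Rightarrow> nat \<Rightarrow> 'a \<Rightarrow> nat) \<Rightarrow> nat \<Rightarrow> 'a measure" where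
  "history M xi n = sigma (space M) (\<Union>ki\<in>{ki. fst ki < n}. offspring_events M xi ki)"

lemma GW_process_prob_space: "GW_process M p xi Z \<Longrightarrow> prob_space M"
  by (simp add: GW_process_def)

lemma GW_process_indep_offspring:
  assumes "GW_process M p xi Z"
  shows "prob_space.indep_sets M (offspring_events M xi) UNIV"
proof -
  interpret prob_space M using assms by (rule GW_process_prob_space)
  have "indep_vars (\<lambda>_. count_space UNIV) (\<lambda>(n, i). xi n i) UNIV"
    using assms by (simp add: GW_process_def)
  then have "indep_sets (\<lambda>ki. {(\<lambda>(n, i). xi n i) ki -` A \<inter> space M | A. A \<in> sets (count_space UNIV)}) UNIV"
    unfolding indep_vars_def2 by simp
  then show ?thesis unfolding offspring_events_def
    by (rule iffD1[OF indep_sets_cong, rotated 2]) (auto split: prod.splits)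
qed

lemma GW_process_offspring_measurable:
  assumes "GW_process M p xi Z"
  shows "xi k i \<in> measurable M (count_space UNIV)"
proof -
  interpret prob_space M using assms by (rule GW_process_prob_space)
  have "indep_vars (\<lambda>_. count_space UNIV) (\<lambda>(n, i). xi n i) UNIV"
    using assms by (simp add: GW_process_def)
  then show ?thesis unfolding indep_vars_def2 by (auto dest!: bspec[where x="(k, i)"])
qed

lemma offspring_events_subset: "offspring_events M xi ki \<subseteq> Pow (space M)"
  unfolding offspring_events_def by (auto split: prod.splits)

lemma space_history [simp]: "space (history M xi n) = space M"
  unfolding history_def by (rule space_measure_of) (use offspring_events_subset in blast)

lemma sets_history:
  "sets (history M xi n) = sigma_sets (space M) (\<Union>ki\<in>{ki. fst ki < n}. offspring_events M xi ki)"
  unfolding history_def by (rule sets_measure_of) (use offspring_events_subset in blast)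

lemma measurable_from_history:
  assumes "GW_process M p xi Z" "f \<in> measurable (history M xi n) N"
  shows "f \<in> measurable M N"
proof -
  have "(\<Union>ki\<in>{ki. fst ki < n}. offspring_events M xi ki) \<subseteq> sets M"
    using GW_process_offspring_measurable[OF assms(1)]
    unfolding offspring_events_def by (auto split: prod.splits)
  then have "sets (history M xi n) \<subseteq> sets M"
    unfolding sets_history by (rule sets.sigma_sets_subset)
  then show ?thesis using assms(2) unfolding measurable_def by auto
qed

lemma offspring_measurable_history:
  assumes "k < n"
  shows "xi k i \<in> measurable (history M xi n) (count_space UNIV)"
proof -
  have "xi k i -` A \<inter> space M \<in> sets (history M xi n)" for A
    unfolding sets_history using assms
    by (intro sigma_sets.Basic UN_I[of "(k, i)"]) (auto simp: offspring_events_def)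
  then show ?thesis unfolding measurable_def by auto
qed

lemma GW_process_Z_measurable_history:
  assumes GW: "GW_process M p xi Z" and "m \<le> n"
  shows "Z m \<in> measurable (history M xi n) (count_space UNIV)"
  using \<open>m \<le> n\<close>
proof (induction m)
  case 0
  have "Z 0 \<in> measurable (history M xi n) (count_space UNIV) \<longleftrightarrow>
      (\<lambda>_. 1::nat) \<in> measurable (history M xi n) (count_space UNIV)"
    using GW by (intro measurable_cong) (simp add: GW_process_def)
  then show ?case by simp
next
  case (Suc m)
  have "Z (Suc m) \<in> measurable (history M xi n) (count_space UNIV) \<longleftrightarrow>
     (\<lambda>\<omega>. (\<lambda>N \<omega>. \<Sum>i<N. xi m i \<omega>) (Z m \<omega>) \<omega>) \<in> measurable (history M xi n) (count_space UNIV)"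
    using GW by (intro measurable_cong) (simp add: GW_process_def)
  moreover have "(\<lambda>\<omega>. (\<lambda>N \<omega>. \<Sum>i<N. xi m i \<omega>) (Z m \<omega>) \<omega>) \<in> measurable (history M xi n) (count_space UNIV)"
  proof (rule measurable_compose_countable[where f="\<lambda>N \<omega>. \<Sum>i<N. xi m i \<omega>" and g="Z m"])
    fix N :: nat
    have "\<And>i. xi m i \<in> measurable (history M xi n) (count_space UNIV)"
      using Suc.prems by (intro offspring_measurable_history) simp
    then show "(\<lambda>\<omega>. \<Sum>i<N. xi m i \<omega>) \<in> measurable (history M xi n) (count_space UNIV)"
      by measurable
  qed (use Suc in simp)
  ultimately show ?case by simp
qed

lemma GW_process_Z_measurable:
  "GW_process M p xi Z \<Longrightarrow> Z m \<in> measurable M (count_space UNIV)"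
  using measurable_from_history GW_process_Z_measurable_history[OF _ order_refl] by blast

lemma nn_integral_offspring_power:
  assumes GW: "GW_process M p xi Z" and s: "0 \<le> s" "s \<le> 1"
  shows "(\<integral>\<^sup>+\<omega>. ennreal (s ^ xi n i \<omega>) \<partial>M) = ennreal (pgf p s)"
proof -
  have law: "distr M (count_space UNIV) (xi n i) = measure_pmf p"
    using GW by (simp add: GW_process_def)
  have "(\<integral>\<^sup>+\<omega>. ennreal (s ^ xi n i \<omega>) \<partial>M)
      = (\<integral>\<^sup>+k. ennreal (s ^ k) \<partial>distr M (count_space UNIV) (xi n i))"
    by (subst nn_integral_distr) (auto simp: GW_process_offspring_measurable[OF GW])
  also have "\<dots> = (\<integral>\<^sup>+k. ennreal (pmf p k) * ennreal (s ^ k) \<partial>count_space UNIV)"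
    unfolding law nn_integral_measure_pmf ..
  also have "\<dots> = (\<Sum>k. ennreal (pmf p k * s ^ k))"
    by (subst nn_integral_count_space_nat) (simp add: ennreal_mult' s)
  also have "\<dots> = ennreal (pgf p s)"
    unfolding pgf_def by (rule suminf_ennreal2) (use summable_pgf[OF s] s in auto)
  finally show ?thesis .
qed

text \<open>Index \<open>None\<close> stands for the history before generation \<open>n\<close>, index \<open>Some i\<close> for the
  \<open>i\<close>-th offspring variable of generation \<open>n\<close>.\<close>
lemma GW_process_indep_history_offspring:
  assumes GW: "GW_process M p xi Z"
  shows "prob_space.indep_sets M (\<lambda>j. case j of None \<Rightarrow> sets (history M xi n)
           | Some i \<Rightarrow> sigma_sets (space M) (offspring_events M xi (n, i))) UNIV"
proof -
  interpret prob_space M using GW by (rule GW_process_prob_space)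
  define J :: "nat option \<Rightarrow> (nat \<times> nat) set" where
    "J j = (case j of None \<Rightarrow> {ki. fst ki < n} | Some i \<Rightarrow> {(n, i)})" for j
  have "indep_sets (\<lambda>j. sigma_sets (space M) (\<Union>ki\<in>J j. offspring_events M xi ki)) UNIV"
  proof (rule indep_sets_collect_sigma)
    show "indep_sets (offspring_events M xi) (\<Union>j\<in>UNIV. J j)"
      by (rule indep_sets_mono_index[OF _ GW_process_indep_offspring[OF GW]]) simp
    show "Int_stable (offspring_events M xi ki)" for ki
    proof -
      obtain k i where ki: "ki = (k, i)" by force
      show ?thesis unfolding Int_stable_def offspring_events_def ki
      proof clarsimp
        show "\<exists>C. xi k i -` A \<inter> space M \<inter> (xi k i -` B \<inter> space M) = xi k i -` C \<inter> space M" for A B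
          by (rule exI[of _ "A \<inter> B"]) auto
      qed
    qed
    show "disjoint_family_on J UNIV"
      unfolding disjoint_family_on_def J_def by (auto split: option.splits)
  qed
  then show ?thesis
    by (rule iffD1[OF indep_sets_cong, rotated 2]) (auto simp: J_def sets_history split: option.splits)
qed

lemma GW_process_indep_vars_history_offspring:
  fixes h :: "'a \<Rightarrow> 'b::topological_space" and g :: "nat \<Rightarrow> 'b"
  assumes GW: "GW_process M p xi Z" and h: "h \<in> borel_measurable (history M xi n)"
  shows "prob_space.indep_vars M (\<lambda>_. borel)
           (\<lambda>j. case j of None \<Rightarrow> h | Some i \<Rightarrow> (\<lambda>\<omega>. g (xi n i \<omega>))) UNIV"
proof -
  interpret prob_space M using GW by (rule GW_process_prob_space)
  define X where "X j = (case j of None \<Rightarrow> h | Some i \<Rightarrow> (\<lambda>\<omega>. g (xi n i \<omega>)))" for j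
  have "indep_vars (\<lambda>_. borel) X UNIV"
    unfolding indep_vars_def2
  proof (intro conjI ballI)
    show "random_variable borel (X j)" for j
      using measurable_from_history[OF GW h] GW_process_offspring_measurable[OF GW]
      by (cases j) (auto simp: X_def)
    show "indep_sets (\<lambda>j. {X j -` A \<inter> space M |A. A \<in> sets borel}) UNIV"
    proof (rule indep_sets_mono_sets[OF GW_process_indep_history_offspring[OF GW]])
      fix j
      show "{X j -` A \<inter> space M |A. A \<in> sets borel} \<subseteq> (case j of None \<Rightarrow> sets (history M xi n)
          | Some i \<Rightarrow> sigma_sets (space M) (offspring_events M xi (n, i)))"
      proof (cases j)
        case None
        then show ?thesis using measurable_sets[OF h] by (auto simp: X_def)
      next
        case (Some i)
        have "(\<lambda>\<omega>. g (xi n i \<omega>)) -` A \<inter> space M \<in> offspring_events M xi (n, i)" for A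
          unfolding offspring_events_def by (auto intro!: exI[of _ "g -` A"])
        then show ?thesis using Some by (auto simp: X_def intro: sigma_sets.Basic)
      qed
    qed
  qed
  then show ?thesis by (simp add: X_def[abs_def])
qed

lemma nn_integral_history_mult_offspring_powers:
  assumes GW: "GW_process M p xi Z"
    and h: "h \<in> borel_measurable (history M xi n)" "\<And>\<omega>. 0 \<le> h \<omega>"
    and s: "0 \<le> s" "s \<le> 1"
  shows "(\<integral>\<^sup>+\<omega>. ennreal (h \<omega> * (\<Prod>i<N. s ^ xi n i \<omega>)) \<partial>M)
       = (\<integral>\<^sup>+\<omega>. ennreal (h \<omega>) \<partial>M) * ennreal (pgf p s ^ N)"
proof -
  interpret prob_space M using GW by (rule GW_process_prob_space)
  define X :: "nat option \<Rightarrow> 'a \<Rightarrow> ennreal" where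
    "X j = (case j of None \<Rightarrow> (\<lambda>\<omega>. ennreal (h \<omega>)) | Some i \<Rightarrow> (\<lambda>\<omega>. ennreal (s ^ xi n i \<omega>)))" for j
  define I where "I = insert None (Some ` {..<N})"
  have "(\<lambda>\<omega>. ennreal (h \<omega>)) \<in> borel_measurable (history M xi n)"
    using h(1) by measurable
  from GW_process_indep_vars_history_offspring[OF GW this, of "\<lambda>k. ennreal (s ^ k)"]
  have "indep_vars (\<lambda>_. borel) X UNIV" by (simp add: X_def[abs_def])
  then have "indep_vars (\<lambda>_. borel) X I" by (rule indep_vars_subset) simp
  then have "(\<integral>\<^sup>+\<omega>. (\<Prod>j\<in>I. X j \<omega>) \<partial>M) = (\<Prod>j\<in>I. \<integral>\<^sup>+\<omega>. X j \<omega> \<partial>M)"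
    by (intro indep_vars_nn_integral) (auto simp: I_def)
  moreover have "(\<Prod>j\<in>I. X j \<omega>) = ennreal (h \<omega> * (\<Prod>i<N. s ^ xi n i \<omega>))" for \<omega>
    unfolding I_def using h(2) s
    by (simp add: prod.reindex X_def prod_ennreal ennreal_mult' prod_nonneg)
  moreover have "(\<Prod>j\<in>I. \<integral>\<^sup>+\<omega>. X j \<omega> \<partial>M) = (\<integral>\<^sup>+\<omega>. ennreal (h \<omega>) \<partial>M) * (\<Prod>i<N. ennreal (pgf p s))"
    unfolding I_def by (simp add: prod.reindex X_def nn_integral_offspring_power[OF GW s])
  moreover have "(\<Prod>i<N. ennreal (pgf p s)) = ennreal (pgf p s ^ N)"
    using s by (simp add: ennreal_power pgf_nonneg)
  ultimately show ?thesis by simp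
qed

lemma nn_integral_split_values:
  fixes X :: "'a \<Rightarrow> nat" and F :: "nat \<Rightarrow> 'a \<Rightarrow> ennreal"
  assumes [measurable]: "X \<in> measurable M (count_space UNIV)" "\<And>N. F N \<in> borel_measurable M"
  shows "(\<integral>\<^sup>+\<omega>. F (X \<omega>) \<omega> \<partial>M) = (\<Sum>N. \<integral>\<^sup>+\<omega>. F N \<omega> * indicator {\<omega>\<in>space M. X \<omega> = N} \<omega> \<partial>M)"
proof -
  have "(\<integral>\<^sup>+\<omega>. F (X \<omega>) \<omega> \<partial>M) = (\<integral>\<^sup>+\<omega>. (\<Sum>N. F N \<omega> * indicator {\<omega>\<in>space M. X \<omega> = N} \<omega>) \<partial>M)"
  proof (rule nn_integral_cong)
    fix \<omega> assume "\<omega> \<in> space M"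
    then have "(\<lambda>N. F N \<omega> * indicator {\<omega>\<in>space M. X \<omega> = N} \<omega>) = (\<lambda>N. if N = X \<omega> then F N \<omega> else 0)"
      by (auto simp: indicator_def)
    then show "F (X \<omega>) \<omega> = (\<Sum>N. F N \<omega> * indicator {\<omega>\<in>space M. X \<omega> = N} \<omega>)"
      using sums_single[of "X \<omega>" "\<lambda>N. F N \<omega>"] by (simp add: sums_iff)
  qed
  also have "\<dots> = (\<Sum>N. \<integral>\<^sup>+\<omega>. F N \<omega> * indicator {\<omega>\<in>space M. X \<omega> = N} \<omega> \<partial>M)"
    by (rule nn_integral_suminf) measurable
  finally show ?thesis .
qed

lemma nn_integral_indicator_Z_offspring_powers:
  assumes GW: "GW_process M p xi Z" and "l \<le> n" and g: "\<And>k. 0 \<le> g k"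
    and s: "0 \<le> s" "s \<le> 1"
  shows "(\<integral>\<^sup>+\<omega>. ennreal (g (Z l \<omega>) * (\<Prod>i<N. s ^ xi n i \<omega>)) * indicator {\<omega>\<in>space M. Z n \<omega> = N} \<omega> \<partial>M)
       = (\<integral>\<^sup>+\<omega>. ennreal (g (Z l \<omega>) * pgf p s ^ N) * indicator {\<omega>\<in>space M. Z n \<omega> = N} \<omega> \<partial>M)"
proof -
  define h where "h \<omega> = g (Z l \<omega>) * indicator {\<omega>\<in>space M. Z n \<omega> = N} \<omega>" for \<omega>
  have h_history: "h \<in> borel_measurable (history M xi n)"
  proof -
    have "{\<omega>\<in>space M. Z n \<omega> = N} = Z n -` {N} \<inter> space (history M xi n)" by auto
    then have "{\<omega>\<in>space M. Z n \<omega> = N} \<in> sets (history M xi n)"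
      using measurable_sets[OF GW_process_Z_measurable_history[OF GW order_refl]] by simp
    then show ?thesis
      using GW_process_Z_measurable_history[OF GW \<open>l \<le> n\<close>] unfolding h_def by measurable
  qed
  have "(\<integral>\<^sup>+\<omega>. ennreal (g (Z l \<omega>) * (\<Prod>i<N. s ^ xi n i \<omega>)) * indicator {\<omega>\<in>space M. Z n \<omega> = N} \<omega> \<partial>M)
      = (\<integral>\<^sup>+\<omega>. ennreal (h \<omega> * (\<Prod>i<N. s ^ xi n i \<omega>)) \<partial>M)"
    by (rule nn_integral_cong) (simp add: h_def indicator_def)
  also have "\<dots> = (\<integral>\<^sup>+\<omega>. ennreal (h \<omega>) \<partial>M) * ennreal (pgf p s ^ N)"
    by (rule nn_integral_history_mult_offspring_powers[OF GW h_history _ s]) (simp add: h_def g)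
  also have "\<dots> = (\<integral>\<^sup>+\<omega>. ennreal (h \<omega>) * ennreal (pgf p s ^ N) \<partial>M)"
    using measurable_from_history[OF GW h_history] by (intro nn_integral_multc[symmetric]) measurable
  also have "\<dots> = (\<integral>\<^sup>+\<omega>. ennreal (g (Z l \<omega>) * pgf p s ^ N) * indicator {\<omega>\<in>space M. Z n \<omega> = N} \<omega> \<partial>M)"
    using g s by (intro nn_integral_cong) (simp add: h_def indicator_def ennreal_mult' pgf_nonneg)
  finally show ?thesis .
qed

lemma nn_integral_next_generation:
  assumes GW: "GW_process M p xi Z" and "l \<le> n" and g: "\<And>k. 0 \<le> g k"
    and s: "0 \<le> s" "s \<le> 1"
  shows "(\<integral>\<^sup>+\<omega>. ennreal (g (Z l \<omega>) * s ^ Z (Suc n) \<omega>) \<partial>M)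
       = (\<integral>\<^sup>+\<omega>. ennreal (g (Z l \<omega>) * pgf p s ^ Z n \<omega>) \<partial>M)"
proof -
  note [measurable] = GW_process_Z_measurable[OF GW] GW_process_offspring_measurable[OF GW]
  have "(\<integral>\<^sup>+\<omega>. ennreal (g (Z l \<omega>) * s ^ Z (Suc n) \<omega>) \<partial>M)
      = (\<integral>\<^sup>+\<omega>. ennreal (g (Z l \<omega>) * (\<Prod>i<Z n \<omega>. s ^ xi n i \<omega>)) \<partial>M)"
    using GW by (intro nn_integral_cong) (simp add: GW_process_def power_sum)
  also have "\<dots> = (\<Sum>N. \<integral>\<^sup>+\<omega>. ennreal (g (Z l \<omega>) * (\<Prod>i<N. s ^ xi n i \<omega>)) * indicator {\<omega>\<in>space M. Z n \<omega> = N} \<omega> \<partial>M)"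
    by (rule nn_integral_split_values[where F="\<lambda>N \<omega>. ennreal (g (Z l \<omega>) * (\<Prod>i<N. s ^ xi n i \<omega>))"])
       measurable
  also have "\<dots> = (\<Sum>N. \<integral>\<^sup>+\<omega>. ennreal (g (Z l \<omega>) * pgf p s ^ N) * indicator {\<omega>\<in>space M. Z n \<omega> = N} \<omega> \<partial>M)"
    by (rule suminf_cong) (rule nn_integral_indicator_Z_offspring_powers[OF GW \<open>l \<le> n\<close> g s])
  also have "\<dots> = (\<integral>\<^sup>+\<omega>. ennreal (g (Z l \<omega>) * pgf p s ^ Z n \<omega>) \<partial>M)"
    by (rule nn_integral_split_values[where F="\<lambda>N \<omega>. ennreal (g (Z l \<omega>) * pgf p s ^ N)", symmetric])
       measurable
  finally show ?thesis .
qed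

lemma nn_integral_later_generation:
  assumes GW: "GW_process M p xi Z" and g: "\<And>k. 0 \<le> g k" and s: "0 \<le> s" "s \<le> 1"
  shows "(\<integral>\<^sup>+\<omega>. ennreal (g (Z l \<omega>) * s ^ Z (l + m) \<omega>) \<partial>M)
       = (\<integral>\<^sup>+\<omega>. ennreal (g (Z l \<omega>) * ((pgf p ^^ m) s) ^ Z l \<omega>) \<partial>M)"
  using s
proof (induction m arbitrary: s)
  case (Suc m)
  have "(\<integral>\<^sup>+\<omega>. ennreal (g (Z l \<omega>) * s ^ Z (l + Suc m) \<omega>) \<partial>M)
      = (\<integral>\<^sup>+\<omega>. ennreal (g (Z l \<omega>) * pgf p s ^ Z (l + m) \<omega>) \<partial>M)"
    using nn_integral_next_generation[OF GW _ g Suc.prems, of l "l + m"] by simp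
  also have "\<dots> = (\<integral>\<^sup>+\<omega>. ennreal (g (Z l \<omega>) * ((pgf p ^^ m) (pgf p s)) ^ Z l \<omega>) \<partial>M)"
    by (rule Suc.IH) (use Suc.prems in \<open>auto simp: pgf_nonneg pgf_le_one\<close>)
  also have "(pgf p ^^ m) (pgf p s) = (pgf p ^^ Suc m) s"
    by (simp add: funpow_Suc_right del: funpow.simps)
  finally show ?case .
qed simp

definition generation_prob :: "'a measure \<Rightarrow> (nat \<Rightarrow> 'a \<Rightarrow> nat) \<Rightarrow> nat \<Rightarrow> nat \<Rightarrow> real" where
  "generation_prob M Z l k = measure M {\<omega>\<in>space M. Z l \<omega> = k}"

lemma generation_prob_nonneg: "0 \<le> generation_prob M Z l k"
  by (simp add: generation_prob_def)

lemma nn_integral_fun_Z: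
  assumes GW: "GW_process M p xi Z" and \<phi>: "\<And>k. 0 \<le> \<phi> k"
  shows "(\<integral>\<^sup>+\<omega>. ennreal (\<phi> (Z l \<omega>)) \<partial>M) = (\<Sum>k. ennreal (\<phi> k * generation_prob M Z l k))"
proof -
  interpret prob_space M using GW by (rule GW_process_prob_space)
  note [measurable] = GW_process_Z_measurable[OF GW]
  show ?thesis
    by (subst nn_integral_split_values[where X="Z l"])
       (simp_all add: nn_integral_cmult_indicator emeasure_eq_measure generation_prob_def ennreal_mult' \<phi>)
qed

lemma generation_prob_sums:
  assumes GW: "GW_process M p xi Z" and s: "0 \<le> s" "s \<le> 1"
  shows "(\<lambda>k. generation_prob M Z l k * s ^ k) sums ((pgf p ^^ l) s)"
proof (rule sums_if_suminf_ennreal_eq)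
  interpret prob_space M using GW by (rule GW_process_prob_space)
  have "(\<integral>\<^sup>+\<omega>. ennreal (1 * s ^ Z (0 + l) \<omega>) \<partial>M) = (\<integral>\<^sup>+\<omega>. ennreal (1 * ((pgf p ^^ l) s) ^ Z 0 \<omega>) \<partial>M)"
    by (rule nn_integral_later_generation[OF GW _ s]) simp
  also have "\<dots> = (\<integral>\<^sup>+\<omega>. ennreal ((pgf p ^^ l) s) \<partial>M)"
    by (rule nn_integral_cong) (use GW in \<open>simp add: GW_process_def\<close>)
  also have "\<dots> = ennreal ((pgf p ^^ l) s)"
    by (simp add: emeasure_space_1)
  finally show "(\<Sum>k. ennreal (generation_prob M Z l k * s ^ k)) = ennreal ((pgf p ^^ l) s)"
    using nn_integral_fun_Z[OF GW, of "\<lambda>k. s ^ k" l] s by (simp add: mult.commute)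
qed (use s funpow_pgf_bounds[OF s] in \<open>auto simp: generation_prob_nonneg\<close>)

definition generation_pgf_deriv :: "'a measure \<Rightarrow> (nat \<Rightarrow> 'a \<Rightarrow> nat) \<Rightarrow> nat \<Rightarrow> real \<Rightarrow> real" where
  "generation_pgf_deriv M Z l x = (\<Sum>k. real (Suc k) * generation_prob M Z l (Suc k) * x ^ k)"

lemma summable_generation_prob:
  "GW_process M p xi Z \<Longrightarrow> summable (generation_prob M Z l)"
  using sums_summable[OF generation_prob_sums[of M p xi Z 1 l]] by simp

lemma generation_pgf_deriv_sums:
  assumes GW: "GW_process M p xi Z" and x: "0 \<le> x" "x < 1"
  shows "(\<lambda>k. real (Suc k) * generation_prob M Z l (Suc k) * x ^ k) sums generation_pgf_deriv M Z l x"
  unfolding generation_pgf_deriv_def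
  by (intro summable_sums summable_powser_deriv summable_generation_prob[OF GW])
     (use x in \<open>auto simp: generation_prob_nonneg\<close>)

lemma generation_pgf_deriv_nonneg:
  "GW_process M p xi Z \<Longrightarrow> 0 \<le> x \<Longrightarrow> x < 1 \<Longrightarrow> 0 \<le> generation_pgf_deriv M Z l x"
  unfolding generation_pgf_deriv_def
  by (intro suminf_nonneg summable_powser_deriv summable_generation_prob)
     (auto simp: generation_prob_nonneg)

lemma generation_pgf_chord_bounds:
  assumes GW: "GW_process M p xi Z" and xy: "0 \<le> y" "y < x" "x \<le> 1"
  shows "y < 1 \<Longrightarrow> generation_pgf_deriv M Z l y * (x - y) \<le> (pgf p ^^ l) x - (pgf p ^^ l) y"
    and "x < 1 \<Longrightarrow> (pgf p ^^ l) x - (pgf p ^^ l) y \<le> generation_pgf_deriv M Z l x * (x - y)"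
proof -
  have w: "\<And>k. 0 \<le> generation_prob M Z l k" "summable (generation_prob M Z l)"
    using summable_generation_prob[OF GW] by (auto simp: generation_prob_nonneg)
  have F: "(pgf p ^^ l) z = (\<Sum>k. generation_prob M Z l k * z ^ k)" if "0 \<le> z" "z \<le> 1" for z
    using generation_prob_sums[OF GW that] by (simp add: sums_iff)
  show "y < 1 \<Longrightarrow> generation_pgf_deriv M Z l y * (x - y) \<le> (pgf p ^^ l) x - (pgf p ^^ l) y"
    using powser_chord_bounds(1)[OF w xy] F xy by (simp add: generation_pgf_deriv_def)
  show "x < 1 \<Longrightarrow> (pgf p ^^ l) x - (pgf p ^^ l) y \<le> generation_pgf_deriv M Z l x * (x - y)"
    using powser_chord_bounds(2)[OF w xy] F xy by (simp add: generation_pgf_deriv_def)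
qed

text \<open>Conditionally on \<open>Z l\<close>, extinction by generation \<open>j\<close> means that each of the \<open>Z l\<close>
  independent subtrees dies out within \<open>j - l\<close> generations; and \<open>E{Z x^Z} = x F'(x)\<close> for the
  generating function \<open>F\<close> of \<open>Z\<close>.\<close>
lemma nn_integral_Z_extinct:
  assumes GW: "GW_process M p xi Z" and "l \<le> j" and q: "(pgf p ^^ (j - l)) 0 < 1"
  shows "(\<integral>\<^sup>+\<omega>. ennreal (real (Z l \<omega>) * indicator {\<omega>\<in>space M. Z j \<omega> = 0} \<omega>) \<partial>M)
       = ennreal ((pgf p ^^ (j - l)) 0 * generation_pgf_deriv M Z l ((pgf p ^^ (j - l)) 0))"
proof -
  define x where "x = (pgf p ^^ (j - l)) 0"
  have x: "0 \<le> x" "x < 1" using funpow_pgf_bounds[where s=0 and p=p and m="j - l"] q by (auto simp: x_def)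
  have "(\<lambda>k. x * (real (Suc k) * generation_prob M Z l (Suc k) * x ^ k)) sums (x * generation_pgf_deriv M Z l x)"
    by (intro sums_mult generation_pgf_deriv_sums[OF GW x])
  then have "(\<lambda>k. real (Suc k) * x ^ Suc k * generation_prob M Z l (Suc k)) sums (x * generation_pgf_deriv M Z l x)"
    by (simp add: mult_ac)
  then have sums: "(\<lambda>k. real k * x ^ k * generation_prob M Z l k) sums (x * generation_pgf_deriv M Z l x)"
    using sums_Suc_iff[where f="\<lambda>k. real k * x ^ k * generation_prob M Z l k"] by simp
  have "(\<integral>\<^sup>+\<omega>. ennreal (real (Z l \<omega>) * indicator {\<omega>\<in>space M. Z j \<omega> = 0} \<omega>) \<partial>M)
      = (\<integral>\<^sup>+\<omega>. ennreal (real (Z l \<omega>) * 0 ^ Z (l + (j - l)) \<omega>) \<partial>M)"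
    using \<open>l \<le> j\<close> by (intro nn_integral_cong) (auto simp: indicator_def)
  also have "\<dots> = (\<integral>\<^sup>+\<omega>. ennreal (real (Z l \<omega>) * x ^ Z l \<omega>) \<partial>M)"
    unfolding x_def by (rule nn_integral_later_generation[OF GW]) auto
  also have "\<dots> = (\<Sum>k. ennreal (real k * x ^ k * generation_prob M Z l k))"
    by (rule nn_integral_fun_Z[OF GW]) (use x in auto)
  also have "\<dots> = ennreal (x * generation_pgf_deriv M Z l x)"
    by (rule suminf_ennreal2[OF _ sums_summable[OF sums], unfolded sums_unique[OF sums, symmetric]])
       (use x in \<open>auto simp: generation_prob_nonneg\<close>)
  finally show ?thesis unfolding x_def .
qed

section \<open>Critical generating functions with a regularly varying defect\<close>

locale critical_gf =
  fixes f :: "real \<Rightarrow> real" and \<alpha> :: real and L :: "real \<Rightarrow> real"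
  assumes alpha_pos: "0 < \<alpha>"
    and f_eq_powr: "\<And>s. 0 \<le> s \<Longrightarrow> s \<le> 1 \<Longrightarrow> f s = s + (1 - s) powr (1 + \<alpha>) * L (1 - s)"
    and L_slowly_varying: "slowly_varying_at_0 L"
    and f_chord_slopes_mono: "\<And>a b c. 0 \<le> a \<Longrightarrow> a < b \<Longrightarrow> b < c \<Longrightarrow> c \<le> 1 \<Longrightarrow>
          (f b - f a) / (b - a) \<le> (f c - f b) / (c - b)"
    and f_0_less_1: "f 0 < 1"
begin

definition U :: "real \<Rightarrow> real" where "U y = f (1 - y) - (1 - y)"
definition slope :: "real \<Rightarrow> real \<Rightarrow> real" where "slope a b = (U b - U a) / (b - a)"
definition r :: "real \<Rightarrow> real" where "r y = U y / y"

lemma U_eq_powr: "0 \<le> y \<Longrightarrow> y \<le> 1 \<Longrightarrow> U y = y powr (1 + \<alpha>) * L y"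
  unfolding U_def using f_eq_powr[of "1 - y"] by simp

lemma U_0: "U 0 = 0"
  using U_eq_powr[of 0] by simp

lemma f_eq_U: "f s = s + U (1 - s)"
  by (simp add: U_def)

lemma slope_mono:
  assumes "0 \<le> a" "a < b" "b < c" "c \<le> 1"
  shows "slope a b \<le> slope b c"
proof -
  have "(f (1 - b) - f (1 - c)) / ((1 - b) - (1 - c)) \<le> (f (1 - a) - f (1 - b)) / ((1 - a) - (1 - b))"
    using assms by (intro f_chord_slopes_mono) auto
  moreover have "slope a b = 1 - (f (1 - a) - f (1 - b)) / ((1 - a) - (1 - b))"
    and "slope b c = 1 - (f (1 - b) - f (1 - c)) / ((1 - b) - (1 - c))"
    using assms by (simp_all add: slope_def U_def field_simps)
  ultimately show ?thesis by linarith
qed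

lemma three_chord:
  assumes "0 \<le> a" "a < b" "b < c" "c \<le> 1"
  shows "slope a b \<le> slope a c" "slope a c \<le> slope b c"
proof -
  have mono: "slope a b \<le> slope b c" by (rule slope_mono[OF assms])
  have "(b - a) * slope a b = U b - U a" and "(c - b) * slope b c = U c - U b"
    using assms by (simp_all add: slope_def)
  then have convex_comb: "slope a c = ((b - a) * slope a b + (c - b) * slope b c) / (c - a)"
    by (simp add: slope_def)
  have "(c - a) * slope a b \<le> (b - a) * slope a b + (c - b) * slope b c"
    using mult_left_mono[OF mono, of "c - b"] assms by (simp add: algebra_simps)
  then show "slope a b \<le> slope a c"
    unfolding convex_comb using assms by (simp add: field_simps)
  have "(b - a) * slope a b + (c - b) * slope b c \<le> (c - a) * slope b c"
    using mult_left_mono[OF mono, of "b - a"] assms by (simp add: algebra_simps)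
  then show "slope a c \<le> slope b c"
    unfolding convex_comb using assms by (simp add: field_simps)
qed

lemma slope_0: "0 < a \<Longrightarrow> slope 0 a = r a"
  by (simp add: slope_def r_def U_0)

lemma r_mono:
  assumes "0 < a" "a \<le> b" "b \<le> 1"
  shows "r a \<le> r b"
  using three_chord(1)[of 0 a b] assms by (cases "a = b") (auto simp: slope_0)

lemma U_pos:
  assumes "0 < y" "y \<le> 1"
  shows "0 < U y"
proof -
  obtain b where b: "b > 0" "\<And>y. y > 0 \<Longrightarrow> y < b \<Longrightarrow> L y > 0"
    using L_slowly_varying unfolding slowly_varying_at_0_def eventually_at_right_field by auto
  define a where "a = min (b/2) y"
  have a: "0 < a" "a < b" "a \<le> y" using b assms by (auto simp: a_def)
  have "0 < r a" using U_eq_powr[of a] b(2)[OF a(1,2)] a assms by (simp add: r_def)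
  also have "\<dots> \<le> r y" by (rule r_mono) (use a assms in auto)
  finally show ?thesis using assms by (simp add: r_def zero_less_divide_iff)
qed

lemma r_pos: "0 < y \<Longrightarrow> y \<le> 1 \<Longrightarrow> 0 < r y"
  using U_pos by (simp add: r_def)

lemma U_strict_mono:
  assumes "0 \<le> a" "a < b" "b \<le> 1"
  shows "U a < U b"
proof (cases "a = 0")
  case False
  then have "0 < r a" using r_pos assms by simp
  also have "r a = slope 0 a" using False assms by (simp add: slope_0)
  also have "\<dots> \<le> slope 0 b" using three_chord(1)[of 0 a b] False assms by simp
  also have "\<dots> \<le> slope a b" using three_chord(2)[of 0 a b] False assms by simp
  finally show ?thesis using assms by (simp add: slope_def zero_less_divide_iff)
qed (use U_pos[of b] assms in \<open>simp add: U_0\<close>)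

lemma U_mono: "0 \<le> a \<Longrightarrow> a \<le> b \<Longrightarrow> b \<le> 1 \<Longrightarrow> U a \<le> U b"
  using U_strict_mono[of a b] by (cases "a = b") auto

lemma U_le_f_0:
  assumes "0 \<le> y" "y \<le> 1"
  shows "U y \<le> f 0 * y"
proof (cases "y = 0")
  case False
  then have "r y \<le> r 1" using assms by (intro r_mono) auto
  then show ?thesis using False assms by (simp add: r_def U_def field_simps)
qed (simp add: U_0)

lemma U_regularly_varying:
  assumes c: "0 < c"
  shows "((\<lambda>y. U (c * y) / U y) \<longlongrightarrow> c powr (1 + \<alpha>)) (at_right 0)"
proof -
  have "((\<lambda>y. L (c * y) / L y) \<longlongrightarrow> 1) (at_right 0)"
    using L_slowly_varying c unfolding slowly_varying_at_0_def by auto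
  from tendsto_mult_left[OF this, of "c powr (1 + \<alpha>)"]
  have "((\<lambda>y. c powr (1 + \<alpha>) * (L (c * y) / L y)) \<longlongrightarrow> c powr (1 + \<alpha>)) (at_right 0)"
    by simp
  moreover have "eventually (\<lambda>y. 0 < y \<and> y < min 1 (1/c)) (at_right (0::real))"
    unfolding eventually_at_right_field using c by (intro exI[of _ "min 1 (1/c)"]) auto
  then have "eventually (\<lambda>y. c powr (1 + \<alpha>) * (L (c * y) / L y) = U (c * y) / U y) (at_right 0)"
  proof eventually_elim
    case (elim y)
    then have "0 \<le> c * y" "c * y \<le> 1" using c by (auto simp: field_simps)
    then show ?case
      using U_eq_powr[of "c * y"] U_eq_powr[of y] elim by (simp add: powr_mult field_simps)
  qed
  ultimately show ?thesis by (rule Lim_transform_eventually)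
qed

text \<open>\<open>r y = y powr \<alpha> * L y\<close> is monotone, so it has a limit \<open>l\<close> at \<open>0\<close>; if \<open>l\<close> were
  positive, \<open>r (y/2) / r y\<close> would tend both to \<open>1\<close> and to \<open>(1/2) powr \<alpha>\<close>.\<close>
lemma r_tendsto_0: "(r \<longlongrightarrow> 0) (at_right 0)"
proof -
  define l where "l = Inf (r ` ({0<..} \<inter> {..1}))"
  have "(r \<longlongrightarrow> l) (at 0 within ({0<..} \<inter> {..1}))"
    unfolding l_def by (rule Lim_right_bound[where K=0]) (auto intro: r_mono less_imp_le[OF r_pos])
  then have lim: "(r \<longlongrightarrow> l) (at_right 0)" by (simp add: at_within_Ioi_Iic_at_right)
  have ev_pos: "eventually (\<lambda>y. 0 < y \<and> y < (1::real)) (at_right 0)"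
    unfolding eventually_at_right_field by (intro exI[of _ 1]) auto
  then have "0 \<le> l"
    by (intro tendsto_lowerbound[OF lim]) (auto elim!: eventually_mono intro: less_imp_le[OF r_pos])
  moreover have False if "0 < l"
  proof -
    have "filterlim (\<lambda>y. y / 2) (at_right 0) (at_right (0::real))"
      by (rule tendsto_imp_filterlim_at_right)
         (auto intro!: tendsto_eq_intros eventually_at_right_less simp: eventually_at_filter)
    then have "((\<lambda>y. r (y / 2) / r y) \<longlongrightarrow> l / l) (at_right 0)"
      using that by (intro tendsto_divide filterlim_compose[OF lim] lim) auto
    then have to_1: "((\<lambda>y. r (y / 2) / r y) \<longlongrightarrow> 1) (at_right 0)"
      using that by simp
    have "((\<lambda>y. 2 * (U ((1/2) * y) / U y)) \<longlongrightarrow> 2 * (1/2) powr (1 + \<alpha>)) (at_right 0)"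
      by (intro tendsto_mult tendsto_const U_regularly_varying) simp
    moreover have "eventually (\<lambda>y. 2 * (U ((1/2) * y) / U y) = r (y / 2) / r y) (at_right 0)"
      using ev_pos by eventually_elim (simp add: r_def field_simps)
    ultimately have "((\<lambda>y. r (y / 2) / r y) \<longlongrightarrow> 2 * (1/2) powr (1 + \<alpha>)) (at_right 0)"
      by (rule Lim_transform_eventually)
    then have "1 = 2 * (1/2::real) powr (1 + \<alpha>)"
      using tendsto_unique[OF _ to_1] by simp
    moreover have "(1/2::real) powr \<alpha> < (1/2) powr 0"
      using alpha_pos by (intro powr_less_mono') auto
    ultimately show False by (simp add: powr_add)
  qed
  ultimately have "l = 0" by fastforce
  then show ?thesis using lim by simp
qed

definition q :: "nat \<Rightarrow> real" where "q n = (f ^^ n) 0"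
definition Q :: "nat \<Rightarrow> real" where "Q n = 1 - q n"
definition d :: "nat \<Rightarrow> real" where "d n = U (Q n)"
definition eps :: "nat \<Rightarrow> real" where "eps n = r (Q n)"

lemma Q_Suc: "Q (Suc n) = Q n - U (Q n)"
  by (simp add: Q_def q_def f_eq_U)

lemma d_eq: "d n = q (Suc n) - q n"
  by (simp add: d_def Q_def q_def f_eq_U)

lemma Q_bounds: "0 < Q n \<and> Q n \<le> 1"
proof (induction n)
  case (Suc n)
  have "U (Q n) \<le> f 0 * Q n" using U_le_f_0[of "Q n"] Suc by simp
  also have "\<dots> < Q n" using f_0_less_1 Suc by simp
  finally show ?case using Suc U_pos[of "Q n"] by (simp add: Q_Suc)
qed (simp add: Q_def q_def)

lemma Q_pos: "0 < Q n" and Q_le_1: "Q n \<le> 1"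
  using Q_bounds by auto

lemma q_nonneg: "0 \<le> q n" and q_less_1: "q n < 1"
  using Q_bounds[of n] by (auto simp: Q_def)

lemma d_pos: "0 < d n"
  using U_pos Q_bounds by (simp add: d_def)

lemma q_less_Suc: "q n < q (Suc n)"
  using d_pos[of n] by (simp add: d_eq)

lemma Q_Suc_less: "Q (Suc n) < Q n"
  using d_pos[of n] by (simp add: Q_Suc d_def)

lemma d_Suc_less: "d (Suc n) < d n"
  unfolding d_def using Q_Suc_less[of n] Q_bounds[of "Suc n"] Q_le_1[of n]
  by (intro U_strict_mono) auto

lemma d_antimono: "m \<le> n \<Longrightarrow> d n \<le> d m"
  by (induction n rule: dec_induct) (auto intro: order.trans[OF less_imp_le[OF d_Suc_less]])

lemma Q_tendsto_0: "Q \<longlonglongrightarrow> 0"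
proof -
  have "decseq Q" using Q_Suc_less by (intro decseq_SucI less_imp_le)
  then obtain l where l: "Q \<longlonglongrightarrow> l" "\<And>n. l \<le> Q n"
    using decseq_convergent[of Q 0] Q_pos less_imp_le by blast
  have "l = 0"
  proof (rule ccontr)
    assume "l \<noteq> 0"
    have "0 \<le> l" using LIMSEQ_le_const[OF l(1), of 0] Q_pos less_imp_le by blast
    then have l_bounds: "0 < l" "l \<le> 1"
      using \<open>l \<noteq> 0\<close> l(2)[of 0] Q_le_1[of 0] by auto
    then have Ul: "0 < U l" by (rule U_pos)
    have Q_le: "Q n \<le> 1 - real n * U l" for n
    proof (induction n)
      case (Suc n)
      have "U l \<le> U (Q n)" using l_bounds l(2) Q_le_1 by (intro U_mono) auto
      then show ?case using Suc by (simp add: Q_Suc algebra_simps)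
    qed (simp add: Q_def q_def)
    obtain n :: nat where "1 / U l < real n" using reals_Archimedean2 by blast
    then have "1 < real n * U l" using Ul by (simp add: field_simps)
    then show False using Q_le[of n] Q_pos[of n] by linarith
  qed
  then show ?thesis using l by simp
qed

lemma Q_at_right: "filterlim Q (at_right 0) sequentially"
  by (rule tendsto_imp_filterlim_at_right[OF Q_tendsto_0]) (use Q_pos in auto)

lemma eps_tendsto_0: "eps \<longlonglongrightarrow> 0"
  unfolding eps_def using filterlim_compose[OF r_tendsto_0 Q_at_right] by simp

lemma eps_pos: "0 < eps n"
  using r_pos Q_bounds by (simp add: eps_def)

lemma Q_Suc_eps: "Q (Suc n) = Q n * (1 - eps n)"
  using Q_pos[of n] by (simp add: Q_Suc eps_def r_def field_simps)

lemma eps_less_1: "eps n < 1"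
  using Q_pos[of "Suc n"] Q_pos[of n] by (simp add: Q_Suc_eps zero_less_mult_iff)

lemma U_ratio_Q:
  "0 < c \<Longrightarrow> (\<lambda>n. U (c * Q n) / U (Q n)) \<longlonglongrightarrow> c powr (1 + \<alpha>)"
  using filterlim_compose[OF U_regularly_varying Q_at_right] by simp

lemma Q_ratio_tendsto_1: "(\<lambda>n. Q (Suc n) / Q n) \<longlonglongrightarrow> 1"
proof -
  have "(\<lambda>n. 1 - eps n) \<longlonglongrightarrow> 1 - 0" by (intro tendsto_intros eps_tendsto_0)
  moreover have "Q (Suc n) / Q n = 1 - eps n" for n using Q_pos[of n] by (simp add: Q_Suc_eps)
  ultimately show ?thesis by simp
qed

lemma chord_below_tendsto:
  assumes "0 < c" "c < 1"
  shows "(\<lambda>n. slope (c * Q n) (Q n) * Q n / U (Q n)) \<longlonglongrightarrow> (1 - c powr (1 + \<alpha>)) / (1 - c)"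
proof -
  have "(\<lambda>n. (1 - U (c * Q n) / U (Q n)) / (1 - c)) \<longlonglongrightarrow> (1 - c powr (1 + \<alpha>)) / (1 - c)"
    using assms by (intro tendsto_intros U_ratio_Q) auto
  moreover have "slope (c * Q n) (Q n) * Q n / U (Q n) = (1 - U (c * Q n) / U (Q n)) / (1 - c)" for n
    using Q_pos[of n] d_pos[of n] assms by (simp add: slope_def d_def field_simps)
  ultimately show ?thesis by simp
qed

lemma chord_above_tendsto:
  assumes "1 < b"
  shows "(\<lambda>n. slope (Q n) (b * Q n) * Q n / U (Q n)) \<longlonglongrightarrow> (b powr (1 + \<alpha>) - 1) / (b - 1)"
proof -
  have "(\<lambda>n. (U (b * Q n) / U (Q n) - 1) / (b - 1)) \<longlonglongrightarrow> (b powr (1 + \<alpha>) - 1) / (b - 1)"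
    using assms by (intro tendsto_intros U_ratio_Q) auto
  moreover have "slope (Q n) (b * Q n) * Q n / U (Q n) = (U (b * Q n) / U (Q n) - 1) / (b - 1)" for n
    using Q_pos[of n] d_pos[of n] assms by (simp add: slope_def d_def field_simps)
  ultimately show ?thesis by simp
qed

definition S :: "nat \<Rightarrow> real" where "S n = slope (Q (Suc n)) (Q n) * Q n / U (Q n)"

lemma S_eventually_greater:
  assumes "a < 1 + \<alpha>"
  shows "eventually (\<lambda>n. a < S n) sequentially"
proof -
  have "((\<lambda>c. (c powr (1 + \<alpha>) - 1) / (c - 1)) \<longlongrightarrow> 1 + \<alpha>) (at_left 1)"
    by (rule tendsto_mono[OF at_le[OF subset_UNIV] powr_difference_quotient_at_1])
  then have "eventually (\<lambda>c. a < (c powr (1 + \<alpha>) - 1) / (c - 1) \<and> c \<in> {0<..<1}) (at_left 1)"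
    using eventually_at_left_real[of 0 1] by (intro eventually_conj order_tendstoD(1)[OF _ assms]) auto
  then obtain c where c: "0 < c" "c < 1" "a < (c powr (1 + \<alpha>) - 1) / (c - 1)"
    using eventually_happens'[OF trivial_limit_at_left_real] by auto
  have "(c powr (1 + \<alpha>) - 1) / (c - 1) = (1 - c powr (1 + \<alpha>)) / (1 - c)"
    by (metis minus_diff_eq minus_divide_divide)
  with c(3) have c3: "a < (1 - c powr (1 + \<alpha>)) / (1 - c)" by simp
  have "eventually (\<lambda>n. a < slope (c * Q n) (Q n) * Q n / U (Q n) \<and> c < Q (Suc n) / Q n) sequentially"
    using order_tendstoD(1)[OF chord_below_tendsto[OF c(1,2)] c3] order_tendstoD(1)[OF Q_ratio_tendsto_1 c(2)]
    by (rule eventually_conj)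
  then show ?thesis
  proof eventually_elim
    case (elim n)
    have "c * Q n < Q (Suc n)" using elim Q_pos[of n] by (simp add: field_simps)
    then have "slope (c * Q n) (Q n) \<le> slope (Q (Suc n)) (Q n)"
      using three_chord(2)[of "c * Q n" "Q (Suc n)" "Q n"] Q_Suc_less[of n] Q_le_1[of n] Q_pos[of n] c
      by simp
    then have "slope (c * Q n) (Q n) * Q n / U (Q n) \<le> S n"
      unfolding S_def using Q_pos[of n] d_pos[of n] by (intro divide_right_mono mult_right_mono) (auto simp: d_def)
    then show ?case using elim by linarith
  qed
qed

lemma S_eventually_less:
  assumes "1 + \<alpha> < a"
  shows "eventually (\<lambda>n. S n < a) sequentially"
proof -
  have "((\<lambda>b. (b powr (1 + \<alpha>) - 1) / (b - 1)) \<longlongrightarrow> 1 + \<alpha>) (at_right 1)"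
    by (rule tendsto_mono[OF at_le[OF subset_UNIV] powr_difference_quotient_at_1])
  then have "eventually (\<lambda>b. (b powr (1 + \<alpha>) - 1) / (b - 1) < a \<and> b \<in> {1<..<2}) (at_right 1)"
    using eventually_at_right_real[of 1 2] by (intro eventually_conj order_tendstoD(2)[OF _ assms]) auto
  then obtain b where b: "1 < b" "(b powr (1 + \<alpha>) - 1) / (b - 1) < a"
    using eventually_happens'[OF trivial_limit_at_right_real] by auto
  have "eventually (\<lambda>n. slope (Q n) (b * Q n) * Q n / U (Q n) < a \<and> Q n < 1 / b) sequentially"
    using b(1) by (intro eventually_conj order_tendstoD(2)[OF chord_above_tendsto[OF b(1)] b(2)]
        order_tendstoD(2)[OF Q_tendsto_0]) simp
  then show ?thesis
  proof eventually_elim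
    case (elim n)
    have "b * Q n \<le> 1" "Q n < b * Q n" using elim b(1) Q_pos[of n] by (simp_all add: field_simps)
    then have "slope (Q (Suc n)) (Q n) \<le> slope (Q n) (b * Q n)"
      using slope_mono[of "Q (Suc n)" "Q n" "b * Q n"] Q_Suc_less[of n] Q_pos[of "Suc n"] by simp
    then have "S n \<le> slope (Q n) (b * Q n) * Q n / U (Q n)"
      unfolding S_def using Q_pos[of n] d_pos[of n] by (intro divide_right_mono mult_right_mono) (auto simp: d_def)
    then show ?case using elim by linarith
  qed
qed

lemma S_tendsto: "S \<longlonglongrightarrow> 1 + \<alpha>"
  by (rule order_tendstoI) (auto intro: S_eventually_greater S_eventually_less)

definition rho :: "nat \<Rightarrow> real" where "rho n = d (Suc n) / d n"

lemma slope_Q_eq: "slope (Q (Suc n)) (Q n) = S n * eps n"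
  using Q_pos[of n] d_pos[of n] by (simp add: S_def eps_def r_def d_def)

lemma rho_eq: "rho n = 1 - S n * eps n"
proof -
  have "Q n - Q (Suc n) = d n" by (simp add: Q_Suc d_def)
  then have "slope (Q (Suc n)) (Q n) = (d n - d (Suc n)) / d n"
    unfolding slope_def by (simp add: d_def)
  then show ?thesis using d_pos[of n] by (simp add: rho_def slope_Q_eq field_simps)
qed

lemma rho_pos: "0 < rho n"
  using d_pos by (simp add: rho_def)

lemma rho_tendsto_1: "rho \<longlonglongrightarrow> 1"
proof -
  have "(\<lambda>n. 1 - S n * eps n) \<longlonglongrightarrow> 1 - (1 + \<alpha>) * 0"
    by (intro tendsto_intros S_tendsto eps_tendsto_0)
  then show ?thesis by (simp add: rho_eq[abs_def])
qed

lemma inverse_eps_Suc_diff: "1 / eps (Suc n) - 1 / eps n = (S n - 1) / rho n"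
proof -
  have ep: "0 < eps n" "eps n < 1" and rp: "0 < rho n" using eps_pos eps_less_1 rho_pos by auto
  have "eps (Suc n) = U (Q (Suc n)) / Q (Suc n)" by (simp add: eps_def r_def)
  also have "\<dots> = (rho n * U (Q n)) / (Q n * (1 - eps n))"
    using d_pos[of n] by (simp add: rho_def d_def Q_Suc_eps)
  also have "\<dots> = eps n * rho n / (1 - eps n)"
    using Q_pos[of n] by (simp add: eps_def r_def)
  finally have "1 / eps (Suc n) = (1 - eps n) / (eps n * rho n)"
    using ep rp by simp
  then have "1 / eps (Suc n) - 1 / eps n = (1 - eps n - rho n) / (rho n * eps n)"
    using ep rp by (simp add: field_simps)
  also have "1 - eps n - rho n = (S n - 1) * eps n"
    by (simp add: rho_eq algebra_simps)
  finally show ?thesis using ep rp by simp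
qed

lemma n_eps_tendsto: "(\<lambda>n. real n * eps n) \<longlonglongrightarrow> 1 / \<alpha>"
proof -
  have "(\<lambda>n. (1 / eps n) / real n) \<longlonglongrightarrow> \<alpha>"
  proof (rule stolz_cesaro)
    have "(\<lambda>n. (S n - 1) / rho n) \<longlonglongrightarrow> ((1 + \<alpha>) - 1) / 1"
      by (intro tendsto_intros S_tendsto rho_tendsto_1) simp
    then show "(\<lambda>n. (1 / eps (Suc n) - 1 / eps n) / (real (Suc n) - real n)) \<longlonglongrightarrow> \<alpha>"
      by (simp add: inverse_eps_Suc_diff)
  qed (simp_all add: filterlim_real_sequentially)
  then have "(\<lambda>n. inverse ((1 / eps n) / real n)) \<longlonglongrightarrow> inverse \<alpha>"
    by (rule tendsto_inverse) (use alpha_pos in simp)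
  then show ?thesis by (simp add: field_simps inverse_eq_divide)
qed

lemma d_ratio_tendsto: "(\<lambda>n. real (Suc n) * (d n / d (Suc n) - 1)) \<longlonglongrightarrow> (1 + \<alpha>) / \<alpha>"
proof -
  have "(\<lambda>n. (real n * eps n) * S n / rho n + S n * eps n / rho n)
      \<longlonglongrightarrow> (1 / \<alpha>) * (1 + \<alpha>) / 1 + (1 + \<alpha>) * 0 / 1"
    by (intro tendsto_intros n_eps_tendsto S_tendsto rho_tendsto_1 eps_tendsto_0) simp_all
  moreover have "real (Suc n) * (d n / d (Suc n) - 1) = (real n * eps n) * S n / rho n + S n * eps n / rho n" for n
  proof -
    have "d n / d (Suc n) = 1 / rho n" by (simp add: rho_def)
    then have x: "d n / d (Suc n) - 1 = S n * eps n / rho n"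
      using rho_pos[of n] by (simp add: field_simps rho_eq)
    show ?thesis unfolding x using rho_pos[of n] by (simp add: field_simps)
  qed
  ultimately show ?thesis using alpha_pos by (simp add: field_simps)
qed

definition T :: "nat \<Rightarrow> real" where "T j = (\<Sum>m<j. 1 / d m)"
definition V :: "nat \<Rightarrow> real" where "V j = (\<Sum>m<j. Q (Suc m) / d m)"

lemma T_pos: "0 < j \<Longrightarrow> 0 < T j"
  unfolding T_def using d_pos by (intro sum_pos) auto

lemma T_asymp: "(\<lambda>j. T j / (real j / d j)) \<longlonglongrightarrow> \<alpha> / (2 * \<alpha> + 1)"
proof (rule stolz_cesaro)
  fix n
  have "real n / d n \<le> real n / d (Suc n)"
    by (intro divide_left_mono less_imp_le[OF d_Suc_less]) (use d_pos in auto)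
  also have "\<dots> < real (Suc n) / d (Suc n)" using d_pos[of "Suc n"] by (simp add: divide_strict_right_mono)
  finally show "real n / d n < real (Suc n) / d (Suc n)" .
next
  show "filterlim (\<lambda>j. real j / d j) at_top sequentially"
  proof (rule filterlim_at_top_linear_lower_bound[of "1 / d 0"])
    show "real j * (1 / d 0) \<le> real j / d j" for j
      using d_antimono[of 0 j] d_pos[of j] by (simp add: divide_left_mono)
  qed (use d_pos in simp)
next
  have "(T (Suc n) - T n) / (real (Suc n) / d (Suc n) - real n / d n)
      = 1 / (1 + real (Suc n) * (d n / d (Suc n) - 1))" for n
    using d_pos[of n] d_pos[of "Suc n"] by (simp add: T_def field_simps)
  moreover have "(\<lambda>n. 1 / (1 + real (Suc n) * (d n / d (Suc n) - 1))) \<longlonglongrightarrow> 1 / (1 + (1 + \<alpha>) / \<alpha>)"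
    by (intro tendsto_intros d_ratio_tendsto) (use alpha_pos in \<open>simp add: field_simps add_pos_pos\<close>)
  moreover have "1 / (1 + (1 + \<alpha>) / \<alpha>) = \<alpha> / (2 * \<alpha> + 1)"
    using alpha_pos by (simp add: field_simps)
  ultimately show "(\<lambda>n. (T (Suc n) - T n) / (real (Suc n) / d (Suc n) - real n / d n)) \<longlonglongrightarrow> \<alpha> / (2 * \<alpha> + 1)"
    by simp
qed

lemma V_T_tendsto_0: "(\<lambda>j. V j / T j) \<longlonglongrightarrow> 0"
proof (rule stolz_cesaro)
  show "T n < T (Suc n)" for n using d_pos[of n] by (simp add: T_def)
  have "real j * (1 / d 0) \<le> T j" for j
  proof -
    have "(\<Sum>m<j. 1 / d 0) \<le> T j"
      unfolding T_def by (intro sum_mono divide_left_mono d_antimono) (use d_pos in auto)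
    then show ?thesis by simp
  qed
  then show "filterlim T at_top sequentially"
    by (rule filterlim_at_top_linear_lower_bound) (use d_pos in simp)
  have "(V (Suc n) - V n) / (T (Suc n) - T n) = Q (Suc n)" for n
    using d_pos[of n] by (simp add: V_def T_def)
  then show "(\<lambda>n. (V (Suc n) - V n) / (T (Suc n) - T n)) \<longlonglongrightarrow> 0"
    using LIMSEQ_Suc[OF Q_tendsto_0] by simp
qed

lemma sum_le_of_upper_bounds:
  assumes "\<And>m. 1 \<le> m \<Longrightarrow> m \<le> j \<Longrightarrow> t m \<le> d j / d m"
  shows "(\<Sum>m\<in>{1..j}. t m) \<le> d j * T j + 1"
proof -
  have "(\<Sum>m\<in>{1..j}. t m) \<le> (\<Sum>m\<in>{1..j}. d j * (1 / d m))"
    using assms by (intro sum_mono) auto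
  also have "\<dots> = d j * (\<Sum>m\<in>{1..j}. 1 / d m)" by (simp add: sum_distrib_left)
  also have "(\<Sum>m\<in>{1..j}. 1 / d m) \<le> (\<Sum>m<Suc j. 1 / d m)"
    by (rule sum_mono2) (use d_pos less_imp_le in \<open>auto simp: less_Suc_eq_le\<close>)
  also have "\<dots> = T j + 1 / d j" by (simp add: T_def)
  finally have "(\<Sum>m\<in>{1..j}. t m) \<le> d j * (T j + 1 / d j)"
    using d_pos[of j] by (simp add: mult_left_mono)
  then show ?thesis using d_pos[of j] by (simp add: distrib_left)
qed

lemma sum_ge_of_lower_bounds:
  assumes "\<And>m. 1 \<le> m \<Longrightarrow> m \<le> j \<Longrightarrow> q m * d (j - 1) / d (m - 1) \<le> t m"
  shows "d j * (T j - V j) \<le> (\<Sum>m\<in>{1..j}. t m)"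
proof -
  have "d j * (T j - V j) = (\<Sum>m<j. d j * (q (Suc m) / d m))"
    by (simp add: T_def V_def Q_def sum_distrib_left flip: sum_subtractf)
       (simp add: diff_divide_distrib right_diff_distrib)
  also have "\<dots> = (\<Sum>m\<in>{1..j}. q m * d j / d (m - 1))"
    unfolding One_nat_def sum.atLeast1_atMost_eq by (simp add: field_simps)
  also have "\<dots> \<le> (\<Sum>m\<in>{1..j}. t m)"
  proof (rule sum_mono)
    fix m assume m: "m \<in> {1..j}"
    have "q m * d j / d (m - 1) \<le> q m * d (j - 1) / d (m - 1)"
      using d_antimono[of "j - 1" j] d_pos[of "m - 1"] q_nonneg[of m]
      by (intro divide_right_mono mult_left_mono) auto
    also have "\<dots> \<le> t m" using assms m by auto
    finally show "q m * d j / d (m - 1) \<le> t m" .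
  qed
  finally show ?thesis .
qed

text \<open>The lower bound loses \<open>d j * V j\<close>, which is negligible because \<open>Q n \<longrightarrow> 0\<close>.\<close>
lemma sandwiched_sum_asymp:
  fixes t :: "nat \<Rightarrow> nat \<Rightarrow> real"
  assumes lo: "\<And>j m. 1 \<le> m \<Longrightarrow> m \<le> j \<Longrightarrow> q m * d (j - 1) / d (m - 1) \<le> t j m"
      and hi: "\<And>j m. 1 \<le> m \<Longrightarrow> m \<le> j \<Longrightarrow> t j m \<le> d j / d m"
  shows "(\<lambda>j. (\<Sum>m\<in>{1..j}. t j m) / real j) \<longlonglongrightarrow> \<alpha> / (2 * \<alpha> + 1)"
proof (rule tendsto_sandwich)
  define W where "W j = T j / (real j / d j)" for j
  have W: "W \<longlonglongrightarrow> \<alpha> / (2 * \<alpha> + 1)" using T_asymp by (simp add: W_def[abs_def])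
  show "(\<lambda>j. W j * (1 - V j / T j)) \<longlonglongrightarrow> \<alpha> / (2 * \<alpha> + 1)"
    using tendsto_mult[OF W tendsto_diff[OF tendsto_const V_T_tendsto_0, of 1]] by simp
  show "(\<lambda>j. W j + 1 / real j) \<longlonglongrightarrow> \<alpha> / (2 * \<alpha> + 1)"
    using tendsto_add[OF W lim_inverse_n'] by simp
  show "eventually (\<lambda>j. (\<Sum>m\<in>{1..j}. t j m) / real j \<le> W j + 1 / real j) sequentially"
  proof (rule eventually_sequentiallyI[of 1])
    fix j :: nat assume "1 \<le> j"
    then have "W j + 1 / real j = (d j * T j + 1) / real j"
      using d_pos[of j] by (simp add: W_def field_simps)
    then show "(\<Sum>m\<in>{1..j}. t j m) / real j \<le> W j + 1 / real j"
      using sum_le_of_upper_bounds[of j "t j"] hi by (simp add: divide_right_mono)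
  qed
  show "eventually (\<lambda>j. W j * (1 - V j / T j) \<le> (\<Sum>m\<in>{1..j}. t j m) / real j) sequentially"
  proof (rule eventually_sequentiallyI[of 1])
    fix j :: nat assume "1 \<le> j"
    then have "W j * (1 - V j / T j) = d j * (T j - V j) / real j"
      using d_pos[of j] T_pos[of j] by (simp add: W_def field_simps)
    then show "W j * (1 - V j / T j) \<le> (\<Sum>m\<in>{1..j}. t j m) / real j"
      using sum_ge_of_lower_bounds[of j "t j"] lo by (simp add: divide_right_mono)
  qed
qed

section \<open>Expected population sizes on extinction\<close>

lemma q_eq_funpow_pgf: "f = pgf p \<Longrightarrow> q m = (pgf p ^^ m) 0"
  unfolding q_def by simp

lemma GW_expectation_Z_extinct:
  assumes GW: "GW_process M p xi Z" and f: "f = pgf p" and "m \<le> j"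
  shows "prob_space.expectation M (\<lambda>\<omega>. real (Z (j - m) \<omega>) * indicator {\<omega>\<in>space M. Z j \<omega> = 0} \<omega>)
       = q m * generation_pgf_deriv M Z (j - m) (q m)"
proof -
  interpret prob_space M using GW by (rule GW_process_prob_space)
  note [measurable] = GW_process_Z_measurable[OF GW]
  have "(\<integral>\<^sup>+\<omega>. ennreal (real (Z (j - m) \<omega>) * indicator {\<omega>\<in>space M. Z j \<omega> = 0} \<omega>) \<partial>M)
      = ennreal (q m * generation_pgf_deriv M Z (j - m) (q m))"
    using nn_integral_Z_extinct[OF GW, of "j - m" j] \<open>m \<le> j\<close> q_less_1[of m]
    unfolding q_eq_funpow_pgf[OF f] by simp
  then show ?thesis
    using q_nonneg[of m] q_less_1[of m] generation_pgf_deriv_nonneg[OF GW]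
    by (subst integral_eq_nn_integral) (auto intro!: AE_I2)
qed

lemma funpow_pgf_q: "f = pgf p \<Longrightarrow> (pgf p ^^ l) (q k) = q (l + k)"
  unfolding q_def by (simp add: funpow_add)

lemma GW_expectation_Z_extinct_bounds:
  assumes GW: "GW_process M p xi Z" and f: "f = pgf p" and m: "1 \<le> m" "m \<le> j"
  defines "E \<equiv> prob_space.expectation M (\<lambda>\<omega>. real (Z (j - m) \<omega>) * indicator {\<omega>\<in>space M. Z j \<omega> = 0} \<omega>)"
  shows "q m * d (j - 1) / d (m - 1) \<le> E" and "E \<le> d j / d m"
proof -
  define D where "D = generation_pgf_deriv M Z (j - m) (q m)"
  have E: "E = q m * D" unfolding E_def D_def using GW_expectation_Z_extinct[OF GW f m(2)] .
  have D_nonneg: "0 \<le> D"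
    unfolding D_def using generation_pgf_deriv_nonneg[OF GW q_nonneg q_less_1] .
  have idx: "j - m + m = j" "j - m + (m - 1) = j - 1" "j - m + Suc m = Suc j" "Suc (m - 1) = m" "Suc (j - 1) = j"
    using m by auto
  have "(pgf p ^^ (j - m)) (q m) - (pgf p ^^ (j - m)) (q (m - 1)) \<le> D * (q m - q (m - 1))"
    unfolding D_def using q_less_Suc[of "m - 1"] idx(4) q_nonneg q_less_1[of m]
    by (intro generation_pgf_chord_bounds(2)[OF GW]) (auto simp: less_imp_le)
  then have "d (j - 1) \<le> D * d (m - 1)"
    unfolding funpow_pgf_q[OF f] idx using d_eq[of "m - 1"] d_eq[of "j - 1"] idx by simp
  then have "d (j - 1) / d (m - 1) \<le> D"
    using d_pos[of "m - 1"] by (simp add: divide_le_eq)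
  then show "q m * d (j - 1) / d (m - 1) \<le> E"
    unfolding E using q_nonneg[of m] by (simp add: mult_left_mono flip: times_divide_eq_right)
  have "D * (q (Suc m) - q m) \<le> (pgf p ^^ (j - m)) (q (Suc m)) - (pgf p ^^ (j - m)) (q m)"
    unfolding D_def using q_less_Suc[of m] q_nonneg q_less_1
    by (intro generation_pgf_chord_bounds(1)[OF GW]) (auto simp: less_imp_le)
  then have "D * d m \<le> d j"
    unfolding funpow_pgf_q[OF f] idx using d_eq[of m] d_eq[of j] by simp
  then have "D \<le> d j / d m"
    using d_pos[of m] by (simp add: le_divide_eq)
  moreover have "E \<le> D"
    unfolding E using q_less_1[of m] q_nonneg[of m] D_nonneg by (intro mult_left_le_one_le) auto
  ultimately show "E \<le> d j / d m" by linarith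
qed

lemma GW_expectation_sum_Z_extinct:
  assumes GW: "GW_process M p xi Z" and f: "f = pgf p"
  shows "prob_space.expectation M (\<lambda>\<omega>. real (\<Sum>l<j. Z l \<omega>) * indicator {\<omega>\<in>space M. Z j \<omega> = 0} \<omega>)
       = (\<Sum>m\<in>{1..j}. prob_space.expectation M
            (\<lambda>\<omega>. real (Z (j - m) \<omega>) * indicator {\<omega>\<in>space M. Z j \<omega> = 0} \<omega>))"
proof -
  interpret prob_space M using GW by (rule GW_process_prob_space)
  note [measurable] = GW_process_Z_measurable[OF GW]
  define A where "A = {\<omega>\<in>space M. Z j \<omega> = 0}"
  define E where "E l = expectation (\<lambda>\<omega>. real (Z l \<omega>) * indicator A \<omega>)" for l
  have E_nonneg: "0 \<le> E l" for l
    unfolding E_def by (rule Bochner_Integration.integral_nonneg) simp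
  have nn_E: "(\<integral>\<^sup>+\<omega>. ennreal (real (Z l \<omega>) * indicator A \<omega>) \<partial>M) = ennreal (E l)" if "l < j" for l
  proof -
    have "(\<integral>\<^sup>+\<omega>. ennreal (real (Z l \<omega>) * indicator A \<omega>) \<partial>M)
        = ennreal (q (j - l) * generation_pgf_deriv M Z l (q (j - l)))"
      using nn_integral_Z_extinct[OF GW, of l j] q_less_1[of "j - l"] that
      unfolding A_def q_eq_funpow_pgf[OF f] by simp
    also have "\<dots> = ennreal (E l)"
      using GW_expectation_Z_extinct[OF GW f, of "j - l" j] that by (simp add: E_def A_def)
    finally show ?thesis .
  qed
  have "expectation (\<lambda>\<omega>. real (\<Sum>l<j. Z l \<omega>) * indicator A \<omega>)
      = enn2real (\<integral>\<^sup>+\<omega>. ennreal (real (\<Sum>l<j. Z l \<omega>) * indicator A \<omega>) \<partial>M)"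
    by (rule integral_eq_nn_integral) (auto simp: A_def intro!: AE_I2 mult_nonneg_nonneg sum_nonneg)
  also have "(\<integral>\<^sup>+\<omega>. ennreal (real (\<Sum>l<j. Z l \<omega>) * indicator A \<omega>) \<partial>M)
      = (\<integral>\<^sup>+\<omega>. (\<Sum>l<j. ennreal (real (Z l \<omega>) * indicator A \<omega>)) \<partial>M)"
    by (rule nn_integral_cong) (simp add: sum_distrib_right)
  also have "\<dots> = (\<Sum>l<j. \<integral>\<^sup>+\<omega>. ennreal (real (Z l \<omega>) * indicator A \<omega>) \<partial>M)"
    by (rule nn_integral_sum) (unfold A_def, measurable)
  also have "\<dots> = (\<Sum>l<j. ennreal (E l))"
    by (rule sum.cong) (simp_all add: nn_E)
  also have "enn2real (\<Sum>l<j. ennreal (E l)) = (\<Sum>l<j. E l)"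
    using E_nonneg by (simp add: sum_nonneg)
  also have "\<dots> = (\<Sum>m\<in>{1..j}. E (j - m))"
    by (rule sum.reindex_bij_witness[where i="\<lambda>m. j - m" and j="\<lambda>l. j - l"]) auto
  finally show ?thesis by (simp add: E_def A_def)
qed

end

lemma pgf_eq_1_if_pmf_0_eq_1:
  assumes "pmf p 0 = 1"
  shows "pgf p s = 1"
proof -
  have "pmf p k = 0" if "k > 0" for k
  proof -
    have "pmf p 0 + pmf p k = sum (pmf p) {0, k}" using that by simp
    also have "\<dots> \<le> (\<Sum>k. pmf p k)"
      by (rule sum_le_suminf) (use sums_summable[OF pmf_sums_one] in auto)
    finally show ?thesis using assms pmf_nonneg[of p k] sums_unique[OF pmf_sums_one[of p]] by linarith
  qed
  then have "(\<lambda>k. pmf p k * s ^ k) = (\<lambda>k. if k = 0 then 1 else 0)"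
    using assms by (auto intro!: ext)
  then show ?thesis using sums_single[of 0 "\<lambda>_. 1::real"] by (simp add: pgf_def sums_iff)
qed

text \<open>If the process died out immediately, \<open>L y\<close> would be \<open>y powr -\<alpha>\<close>, which is not
  slowly varying.\<close>
lemma pgf_0_less_1:
  assumes alpha: "0 < \<alpha>" and L: "slowly_varying_at_0 L"
    and gf: "\<forall>s\<in>{0..1::real}. (\<Sum>k. pmf p k * s ^ k) = s + (1 - s) powr (1 + \<alpha>) * L (1 - s)"
  shows "pgf p 0 < 1"
proof (rule ccontr)
  assume "\<not> pgf p 0 < 1"
  then have "pmf p 0 = 1" using pmf_le_1[of p 0] by (simp add: pgf_0)
  have L_eq: "L y = 1 / y powr \<alpha>" if "0 < y" "y \<le> 1" for y :: real
  proof -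
    have "1 = (1 - y) + y powr (1 + \<alpha>) * L y"
      using gf[rule_format, of "1 - y"] that pgf_eq_1_if_pmf_0_eq_1[OF \<open>pmf p 0 = 1\<close>]
      by (simp add: pgf_def)
    then have "y * (y powr \<alpha> * L y) = y" using that by (simp add: powr_add algebra_simps)
    then show ?thesis using that by (simp add: field_simps)
  qed
  have "eventually (\<lambda>x. 1 / 2 powr \<alpha> = L (2 * x) / L x) (at_right (0::real))"
    unfolding eventually_at_right_field
    by (intro exI[of _ "1/2"]) (auto simp: L_eq powr_mult field_simps)
  then have "((\<lambda>x. L (2 * x) / L x) \<longlongrightarrow> 1 / 2 powr \<alpha>) (at_right 0)"
    by (rule Lim_transform_eventually[OF tendsto_const])
  moreover have "((\<lambda>x. L (2 * x) / L x) \<longlongrightarrow> 1) (at_right 0)"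
    using L by (simp add: slowly_varying_at_0_def)
  ultimately have "1 / 2 powr \<alpha> = (1::real)"
    by (rule tendsto_unique[OF trivial_limit_at_right_real])
  then show False using alpha by simp
qed

lemma critical_gf_pgf:
  assumes "0 < \<alpha>" "slowly_varying_at_0 L"
    and gf: "\<forall>s\<in>{0..1::real}. (\<Sum>k. pmf p k * s ^ k) = s + (1 - s) powr (1 + \<alpha>) * L (1 - s)"
  shows "critical_gf (pgf p) \<alpha> L"
proof
  show "pgf p s = s + (1 - s) powr (1 + \<alpha>) * L (1 - s)" if "0 \<le> s" "s \<le> 1" for s
    using gf that by (simp add: pgf_def)
qed (use assms pgf_0_less_1[OF assms] pgf_chord_slopes_mono in auto)

theorem lemma18:
  fixes M :: "'a measure" and p :: "nat pmf" and xi :: "nat \<Rightarrow> nat \<Rightarrow> 'a \<Rightarrow> nat"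
    and Z :: "nat \<Rightarrow> 'a \<Rightarrow> nat" and \<alpha> :: real and L :: "real \<Rightarrow> real"
  assumes GW: "GW_process M p xi Z"
    and mean: "integrable (measure_pmf p) real" "measure_pmf.expectation p real = 1"
    and alpha: "0 < \<alpha>" "\<alpha> \<le> 1"
    and L: "slowly_varying_at_0 L"
    and gf: "\<forall>s\<in>{0..1::real}. (\<Sum>k. pmf p k * s ^ k) = s + (1 - s) powr (1 + \<alpha>) * L (1 - s)"
  shows "(\<lambda>j. prob_space.expectation M
              (\<lambda>\<omega>. real (\<Sum>l<j. Z l \<omega>) * indicator {\<omega>\<in>space M. Z j \<omega> = 0} \<omega>))
         \<sim>[at_top] (\<lambda>j. \<alpha> * real j / (2 * \<alpha> + 1))"
proof -
  interpret critical_gf "pgf p" \<alpha> L by (rule critical_gf_pgf[OF alpha(1) L gf])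
  define E where "E j m = prob_space.expectation M
      (\<lambda>\<omega>. real (Z (j - m) \<omega>) * indicator {\<omega>\<in>space M. Z j \<omega> = 0} \<omega>)" for j m
  have "(\<lambda>j. (\<Sum>m\<in>{1..j}. E j m) / real j) \<longlonglongrightarrow> \<alpha> / (2 * \<alpha> + 1)"
    by (rule sandwiched_sum_asymp) (use GW_expectation_Z_extinct_bounds[OF GW refl] in \<open>auto simp: E_def\<close>)
  then have "(\<lambda>j. prob_space.expectation M
      (\<lambda>\<omega>. real (\<Sum>l<j. Z l \<omega>) * indicator {\<omega>\<in>space M. Z j \<omega> = 0} \<omega>)) \<sim>[at_top] (\<lambda>j. \<alpha> / (2 * \<alpha> + 1) * real j)"
    unfolding E_def GW_expectation_sum_Z_extinct[OF GW refl, symmetric]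
    by (rule asymp_equiv_linear_if_ratio_tendsto) (use alpha in simp)
  then show ?thesis by simp
qed

end
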